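(* Let $n\ge2$, let $0<f_1\le\dots\le f_n$ and $F_j=\sum_{i=1}^j f_i$. For $k\in\{1,\ldots,n-1\}$ let $X_k=1/(F_{n-k}+Z_k)^2$ where $Z_k\sim\Gamma\big(k,e\binom n2/k\big)$. Then for any $k\in\{1,\ldots,n-1\}$, $$\mathbb{E}[X_k]\le O\left(\frac{n^4F_{n-k}+kn^2}{n^4F_{n-k}^3+k^4F_{n-k}}\right).$$
   Context: $\Gamma(k,\lambda)$ denotes the distribution of the sum of $k$ independent exponential random variables with rate $\lambda$, i.e. density $\lambda^k x^{k-1}e^{-\lambda x}/(k-1)!$ on $x>0$. *)

theory Defs
  imports "HOL-Probability.Probability"
begin

text \<open>Gamma(k,l) distribution (sum of k independent Exp(l)), for k \<ge> 1:
  the library's Erlang density with shape index k-1.\<close>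
definition gamma_distr :: "nat \<Rightarrow> real \<Rightarrow> real measure" where
  "gamma_distr k l = density lborel (erlang_density (k - 1) l)"

end

theory Submission
  imports Defs
begin

text \<open>Write \<open>Z\<close> for the Gamma variable with rate \<open>\<lambda> = e\<cdot>C(n,2)/k \<le> 3n\<^sup>2/(2k)\<close> and
  \<open>F = F\<^sub>n\<^sub>-\<^sub>k\<close>. Three elementary bounds on \<open>E[1/(F+Z)\<^sup>2]\<close> suffice: \<open>1/F\<^sup>2\<close> since \<open>Z \<ge> 0\<close>;
  \<open>\<lambda>/F\<close> since the Erlang density never exceeds its rate \<open>\<lambda>\<close>; and, for \<open>k \<ge> 3\<close>,
  \<open>E[1/Z\<^sup>2] = \<lambda>\<^sup>2/((k-1)(k-2))\<close>, because \<open>z\<^sup>-\<^sup>2\<close> times the Erlang density of shape \<open>k\<close> is a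
  multiple of the one of shape \<open>k - 2\<close>. If \<open>k\<^sup>4 \<le> n\<^sup>4F\<^sup>2\<close> the first bound gives the claim;
  otherwise the denominator is at most \<open>2k\<^sup>4F\<close>, and the third bound (for \<open>k \<ge> 3\<close>) or the
  second one (for \<open>k \<le> 2\<close>) does.\<close>

lemma power_div_fact_le_exp:
  fixes x :: real
  assumes "0 \<le> x"
  shows "x ^ m / fact m \<le> exp x"
proof -
  have "(\<Sum>n\<in>{m}. x ^ n / fact n) \<le> (\<Sum>n. x ^ n / fact n)"
    using assms summable_exp_generic[of x]
    by (intro sum_le_suminf) (auto simp: divide_inverse ac_simps)
  then show ?thesis
    by (simp add: exp_def divide_inverse ac_simps)
qed

lemma erlang_density_le_rate:
  assumes "0 < l"
  shows "erlang_density m l z \<le> l"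
proof (cases "z < 0")
  case True
  then show ?thesis
    using assms by (simp add: erlang_density_def)
next
  case False
  have "erlang_density m l z = l * ((l * z) ^ m / fact m) * exp (- (l * z))"
    using False by (simp add: erlang_density_def power_mult_distrib)
  also have "\<dots> \<le> l * exp (l * z) * exp (- (l * z))"
    using False assms by (intro mult_right_mono mult_left_mono power_div_fact_le_exp) auto
  also have "\<dots> = l"
    by (simp add: exp_minus)
  finally show ?thesis .
qed

lemma erlang_density_Suc_Suc_div_square:
  assumes "0 < z"
  shows "erlang_density (Suc (Suc m)) l z / z\<^sup>2
    = l\<^sup>2 / ((real m + 2) * (real m + 1)) * erlang_density m l z"
proof -
  have "fact (Suc (Suc m)) = (real m + 2) * (real m + 1) * (fact m :: real)"
    by (simp add: algebra_simps)
  then show ?thesis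
    using assms by (simp add: erlang_density_def power2_eq_square ac_simps)
qed

lemma nn_integral_erlang_density_times_const:
  assumes "0 < l"
  shows "(\<integral>\<^sup>+ z. ennreal (erlang_density m l z) * c \<partial>lborel) = c"
  using nn_integral_erlang_ith_moment[OF assms, of m 0]
  by (subst nn_integral_multc) auto

lemma nn_integral_erlang_density_le_bound:
  assumes "0 < l" and "\<And>z. 0 \<le> z \<Longrightarrow> g z \<le> c"
  shows "(\<integral>\<^sup>+ z. ennreal (erlang_density m l z) * ennreal (g z) \<partial>lborel) \<le> ennreal c"
proof -
  have "(\<integral>\<^sup>+ z. ennreal (erlang_density m l z) * ennreal (g z) \<partial>lborel)
      \<le> (\<integral>\<^sup>+ z. ennreal (erlang_density m l z) * ennreal c \<partial>lborel)"
    using assms(2) by (intro nn_integral_mono)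
      (auto simp: erlang_density_def intro!: mult_left_mono ennreal_leI)
  then show ?thesis
    using nn_integral_erlang_density_times_const[OF assms(1)] by simp
qed

lemma nn_integral_erlang_density_le_rate_times:
  assumes "0 < l" and "g \<in> borel_measurable borel"
  shows "(\<integral>\<^sup>+ z. ennreal (erlang_density m l z) * ennreal (g z) \<partial>lborel)
    \<le> ennreal l * (\<integral>\<^sup>+ z. ennreal (g z) * indicator {0..} z \<partial>lborel)"
proof -
  have "ennreal (erlang_density m l z) * ennreal (g z) \<le> ennreal l * (ennreal (g z) * indicator {0..} z)"
    for z
    using erlang_density_le_rate[OF assms(1), of m z]
    by (cases "z < 0") (auto simp: erlang_density_def intro!: mult_right_mono ennreal_leI)
  then have "(\<integral>\<^sup>+ z. ennreal (erlang_density m l z) * ennreal (g z) \<partial>lborel)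
      \<le> (\<integral>\<^sup>+ z. ennreal l * (ennreal (g z) * indicator {0..} z) \<partial>lborel)"
    by (intro nn_integral_mono)
  also have "\<dots> = ennreal l * (\<integral>\<^sup>+ z. ennreal (g z) * indicator {0..} z \<partial>lborel)"
    using assms(2) by (intro nn_integral_cmult) simp
  finally show ?thesis .
qed

lemma nn_integral_inverse_square_shifted:
  fixes F :: real
  assumes "0 < F"
  shows "(\<integral>\<^sup>+ z. ennreal (1 / (F + z)\<^sup>2) * indicator {0..} z \<partial>lborel) = ennreal (1 / F)"
proof -
  have "(\<integral>\<^sup>+ z. ennreal (1 / (F + z)\<^sup>2) * indicator {0..} z \<partial>lborel) = ennreal (0 - (- 1 / (F + 0)))"
  proof (rule nn_integral_FTC_atLeast)
    fix x :: real
    assume "0 \<le> x"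
    then have "F + x \<noteq> 0"
      using assms by auto
    then show "((\<lambda>z. - 1 / (F + z)) has_real_derivative 1 / (F + x)\<^sup>2) (at x)"
      by (auto intro!: derivative_eq_intros simp: power2_eq_square)
  qed (auto, real_asymp)
  then show ?thesis
    by simp
qed

lemma nn_integral_erlang_inverse_square_le_inverse_square:
  fixes F :: real
  assumes "0 < l" and "0 < F"
  shows "(\<integral>\<^sup>+ z. ennreal (erlang_density m l z) * ennreal (1 / (F + z)\<^sup>2) \<partial>lborel)
    \<le> ennreal (1 / F\<^sup>2)"
  using assms by (intro nn_integral_erlang_density_le_bound) (auto intro!: divide_left_mono power_mono)

lemma nn_integral_erlang_inverse_square_le_rate_div:
  fixes F :: real
  assumes "0 < l" and "0 < F"
  shows "(\<integral>\<^sup>+ z. ennreal (erlang_density m l z) * ennreal (1 / (F + z)\<^sup>2) \<partial>lborel)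
    \<le> ennreal (l / F)"
proof -
  have "(\<integral>\<^sup>+ z. ennreal (erlang_density m l z) * ennreal (1 / (F + z)\<^sup>2) \<partial>lborel)
      \<le> ennreal l * ennreal (1 / F)"
    using nn_integral_erlang_density_le_rate_times[OF assms(1), of "\<lambda>z. 1 / (F + z)\<^sup>2" m]
    unfolding nn_integral_inverse_square_shifted[OF assms(2)] by simp
  also have "\<dots> = ennreal (l / F)"
    using assms by (simp add: ennreal_mult'[symmetric])
  finally show ?thesis .
qed

lemma nn_integral_erlang_inverse_square_le_shape:
  fixes F :: real
  assumes "0 < l" and "0 \<le> F" and "2 \<le> m"
  shows "(\<integral>\<^sup>+ z. ennreal (erlang_density m l z) * ennreal (1 / (F + z)\<^sup>2) \<partial>lborel)
    \<le> ennreal (l\<^sup>2 / (real m * (real m - 1)))"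
proof -
  obtain j where m: "m = Suc (Suc j)"
    using assms(3) by (metis add_2_eq_Suc le_Suc_ex)
  define c where "c = l\<^sup>2 / (real m * (real m - 1))"
  have "ennreal (erlang_density m l z) * ennreal (1 / (F + z)\<^sup>2)
      \<le> ennreal (erlang_density j l z) * ennreal c" for z
  proof (cases "0 < z")
    case True
    have "erlang_density m l z * (1 / (F + z)\<^sup>2) \<le> erlang_density m l z * (1 / z\<^sup>2)"
      using True assms by (intro mult_left_mono divide_left_mono power_mono) auto
    also have "\<dots> = erlang_density j l z * c"
      using erlang_density_Suc_Suc_div_square[OF True, of j l]
      by (simp add: m c_def algebra_simps)
    finally show ?thesis
      using assms by (simp add: ennreal_mult'[symmetric] ennreal_leI)
  qed (auto simp: erlang_density_def m)
  then have "(\<integral>\<^sup>+ z. ennreal (erlang_density m l z) * ennreal (1 / (F + z)\<^sup>2) \<partial>lborel)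
      \<le> (\<integral>\<^sup>+ z. ennreal (erlang_density j l z) * ennreal c \<partial>lborel)"
    by (intro nn_integral_mono)
  then show ?thesis
    using nn_integral_erlang_density_times_const[OF assms(1)] by (simp add: c_def)
qed

lemma integral_gamma_distr_le:
  assumes "0 < l" and "g \<in> borel_measurable borel" and "\<And>z. 0 \<le> g z" and "0 \<le> B"
    and "(\<integral>\<^sup>+ z. ennreal (erlang_density (k - 1) l z) * ennreal (g z) \<partial>lborel) \<le> ennreal B"
  shows "(\<integral>z. g z \<partial>gamma_distr k l) \<le> B"
proof -
  have "(\<integral>z. g z \<partial>gamma_distr k l) = enn2real (\<integral>\<^sup>+ z. ennreal (g z) \<partial>gamma_distr k l)"
    using assms(2,3) by (intro integral_eq_nn_integral) (auto simp: gamma_distr_def)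
  also have "(\<integral>\<^sup>+ z. ennreal (g z) \<partial>gamma_distr k l)
      = (\<integral>\<^sup>+ z. ennreal (erlang_density (k - 1) l z) * ennreal (g z) \<partial>lborel)"
    unfolding gamma_distr_def using assms(1,2) by (intro nn_integral_density) auto
  also have "enn2real \<dots> \<le> B"
    using assms(4,5) enn2real_mono[of _ "ennreal B"] by fastforce
  finally show ?thesis .
qed

lemma integral_gamma_distr_inverse_square_le_inverse_square:
  fixes F :: real
  assumes "0 < l" and "0 < F"
  shows "(\<integral>z. 1 / (F + z)\<^sup>2 \<partial>gamma_distr k l) \<le> 1 / F\<^sup>2"
  using assms
  by (intro integral_gamma_distr_le nn_integral_erlang_inverse_square_le_inverse_square) auto

lemma integral_gamma_distr_inverse_square_le_rate_div:
  fixes F :: real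
  assumes "0 < l" and "0 < F"
  shows "(\<integral>z. 1 / (F + z)\<^sup>2 \<partial>gamma_distr k l) \<le> l / F"
  using assms
  by (intro integral_gamma_distr_le nn_integral_erlang_inverse_square_le_rate_div) auto

lemma integral_gamma_distr_inverse_square_le_shape:
  fixes F :: real
  assumes "0 < l" and "0 \<le> F" and "3 \<le> k"
  shows "(\<integral>z. 1 / (F + z)\<^sup>2 \<partial>gamma_distr k l) \<le> l\<^sup>2 / ((real k - 1) * (real k - 2))"
proof (rule integral_gamma_distr_le)
  have "real (k - 1) * (real (k - 1) - 1) = (real k - 1) * (real k - 2)"
    using assms(3) by (simp add: of_nat_diff algebra_simps)
  then show "(\<integral>\<^sup>+ z. ennreal (erlang_density (k - 1) l z) * ennreal (1 / (F + z)\<^sup>2) \<partial>lborel)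
      \<le> ennreal (l\<^sup>2 / ((real k - 1) * (real k - 2)))"
    using nn_integral_erlang_inverse_square_le_shape[of l F "k - 1"] assms by simp
qed (use assms in auto)

lemma denominator_le_twice:
  fixes N K F :: real
  assumes "N^4 * F\<^sup>2 \<le> K^4" and "0 < F"
  shows "N^4 * F^3 + K^4 * F \<le> 2 * K^4 * F"
proof -
  have "N^4 * F^3 = (N^4 * F\<^sup>2) * F"
    by (simp add: power2_eq_square power3_eq_cube)
  also have "\<dots> \<le> K^4 * F"
    using assms by (intro mult_right_mono) auto
  finally show ?thesis by (simp add: mult.commute)
qed

lemma inverse_square_le_ratio:
  fixes N K F :: real
  assumes "K^4 \<le> N^4 * F\<^sup>2" and "0 < F" and "0 < N" and "0 \<le> K"
  shows "1 / F\<^sup>2 \<le> 2 * ((N^4 * F + K * N\<^sup>2) / (N^4 * F^3 + K^4 * F))"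
proof -
  have D: "0 < N^4 * F^3 + K^4 * F"
    using assms by (intro add_pos_nonneg) auto
  have "1 / F\<^sup>2 * (N^4 * F^3 + K^4 * F) = N^4 * F + K^4 / F"
    using assms(2) by (simp add: field_simps power2_eq_square power3_eq_cube)
  also have "K^4 / F \<le> N^4 * F\<^sup>2 / F"
    using assms by (intro divide_right_mono) auto
  also have "N^4 * F + N^4 * F\<^sup>2 / F \<le> 2 * (N^4 * F + K * N\<^sup>2)"
    using assms by (simp add: power2_eq_square)
  finally show ?thesis
    using D by (simp add: le_divide_eq)
qed

lemma quartic_ratio_le_ratio:
  fixes N K F :: real
  assumes "N^4 * F\<^sup>2 \<le> K^4" and "0 < F" and "0 < K"
  shows "27/2 * N^4 / K^4 \<le> 27 * ((N^4 * F + K * N\<^sup>2) / (N^4 * F^3 + K^4 * F))"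
proof -
  have D: "0 < N^4 * F^3 + K^4 * F"
    using assms by (intro add_nonneg_pos) auto
  have "27/2 * N^4 / K^4 * (N^4 * F^3 + K^4 * F) \<le> 27/2 * N^4 / K^4 * (2 * K^4 * F)"
    using denominator_le_twice[OF assms(1,2)] by (intro mult_left_mono) auto
  also have "\<dots> = 27 * (N^4 * F)"
    using assms(3) by simp
  also have "\<dots> \<le> 27 * (N^4 * F + K * N\<^sup>2)"
    using assms by simp
  finally show ?thesis
    using D by (simp add: le_divide_eq)
qed

lemma rate_ratio_le_ratio:
  fixes N K F :: real
  assumes "N^4 * F\<^sup>2 \<le> K^4" and "0 < F" and "0 < K" and "K \<le> 3"
  shows "3 * N\<^sup>2 / (2 * K * F) \<le> 27 * ((N^4 * F + K * N\<^sup>2) / (N^4 * F^3 + K^4 * F))"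
proof -
  have D: "0 < N^4 * F^3 + K^4 * F"
    using assms by (intro add_nonneg_pos) auto
  have "K\<^sup>2 \<le> 3\<^sup>2"
    using assms by (intro power_mono) auto
  have "3 * N\<^sup>2 / (2 * K * F) * (N^4 * F^3 + K^4 * F) \<le> 3 * N\<^sup>2 / (2 * K * F) * (2 * K^4 * F)"
    using denominator_le_twice[OF assms(1,2)] assms by (intro mult_left_mono) auto
  also have "\<dots> = 3 * K * (N\<^sup>2 * K\<^sup>2)"
    using assms by (simp add: field_simps power2_eq_square power4_eq_xxxx)
  also have "\<dots> \<le> 3 * K * (N\<^sup>2 * 9)"
    using \<open>K\<^sup>2 \<le> 3\<^sup>2\<close> assms by (intro mult_left_mono) auto
  also have "\<dots> \<le> 27 * (N^4 * F + K * N\<^sup>2)"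
    using assms by simp
  finally show ?thesis
    using D by (simp add: le_divide_eq)
qed

lemma min_of_bounds_le_ratio:
  fixes N K F l E :: real
  assumes "0 < F" and "1 \<le> K" and "0 < N" and "0 < l" and rate: "l \<le> 3 * N\<^sup>2 / (2 * K)"
    and E1: "E \<le> 1 / F\<^sup>2" and E2: "E \<le> l / F"
    and E3: "3 \<le> K \<Longrightarrow> E \<le> l\<^sup>2 / ((K - 1) * (K - 2))"
  shows "E \<le> 27 * ((N^4 * F + K * N\<^sup>2) / (N^4 * F^3 + K^4 * F))"
proof -
  define R where "R = (N^4 * F + K * N\<^sup>2) / (N^4 * F^3 + K^4 * F)"
  have "0 \<le> R"
    using assms by (simp add: R_def)
  consider "K^4 \<le> N^4 * F\<^sup>2" | "N^4 * F\<^sup>2 \<le> K^4" "3 \<le> K" | "N^4 * F\<^sup>2 \<le> K^4" "K \<le> 3"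
    by linarith
  then have "E \<le> 27 * R"
  proof cases
    case 1
    have "1 / F\<^sup>2 \<le> 2 * R"
      using 1 assms unfolding R_def by (intro inverse_square_le_ratio) auto
    then show ?thesis
      using E1 \<open>0 \<le> R\<close> by linarith
  next
    case 2
    have "K\<^sup>2 / 6 \<le> (K - 1) * (K - 2)"
      using mult_nonneg_nonneg[of "K - 3" "5 * K - 3"] 2 by (simp add: power2_eq_square algebra_simps)
    then have "l\<^sup>2 / ((K - 1) * (K - 2)) \<le> (3 * N\<^sup>2 / (2 * K))\<^sup>2 / (K\<^sup>2 / 6)"
      using 2 assms by (intro frac_le power_mono) auto
    also have "\<dots> = 27/2 * N^4 / K^4"
      using 2 by (simp add: field_simps power2_eq_square power4_eq_xxxx)
    also have "\<dots> \<le> 27 * R"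
      unfolding R_def using 2 assms by (intro quartic_ratio_le_ratio) auto
    finally show ?thesis
      using E3 2 by linarith
  next
    case 3
    have "l / F \<le> 3 * N\<^sup>2 / (2 * K) / F"
      using rate assms by (intro divide_right_mono) auto
    also have "\<dots> = 3 * N\<^sup>2 / (2 * K * F)"
      by simp
    also have "\<dots> \<le> 27 * R"
      unfolding R_def using 3 assms by (intro rate_ratio_le_ratio) auto
    finally show ?thesis
      using E2 by linarith
  qed
  then show ?thesis
    by (simp add: R_def)
qed

lemma real_choose_two_le: "real (n choose 2) \<le> real n ^ 2 / 2"
proof -
  have "2 * (n choose 2) \<le> n * (n - 1)"
    unfolding choose_two by simp
  also have "\<dots> \<le> n ^ 2"
    by (simp add: power2_eq_square)
  finally show ?thesis
    by (simp add: le_divide_eq of_nat_le_iff[symmetric, where 'a=real])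
qed

theorem lemma14:
  shows "\<exists>C>0. \<forall>(n::nat) (f::nat \<Rightarrow> real) (k::nat).
    2 \<le> n \<longrightarrow>
    (\<forall>i\<in>{1..n}. 0 < f i) \<longrightarrow>
    (\<forall>i j. 1 \<le> i \<longrightarrow> i \<le> j \<longrightarrow> j \<le> n \<longrightarrow> f i \<le> f j) \<longrightarrow>
    k \<in> {1..n-1} \<longrightarrow>
    (let F = (\<Sum>i=1..n-k. f i);
         l = exp 1 * real (n choose 2) / real k
     in (\<integral>z. 1 / (F + z)^2 \<partial>gamma_distr k l)
        \<le> C * ((real n^4 * F + real k * real n^2) / (real n^4 * F^3 + real k^4 * F)))"
proof (intro exI[of _ 27] conjI allI impI)
  fix n :: nat and f :: "nat \<Rightarrow> real" and k :: nat
  assume n: "2 \<le> n" and f_pos: "\<forall>i\<in>{1..n}. 0 < f i" and k: "k \<in> {1..n-1}"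
  define F where "F = (\<Sum>i=1..n-k. f i)"
  define l where "l = exp 1 * real (n choose 2) / real k"
  have "0 < F"
    unfolding F_def using f_pos k by (intro sum_pos) auto
  have "0 < l"
    unfolding l_def using n k by auto
  have "l \<le> 3 * (real n ^ 2 / 2) / real k"
    unfolding l_def using exp_le real_choose_two_le by (intro divide_right_mono mult_mono) auto
  then have "l \<le> 3 * real n ^ 2 / (2 * real k)"
    by simp
  then show "let F = (\<Sum>i=1..n-k. f i); l = exp 1 * real (n choose 2) / real k
     in (\<integral>z. 1 / (F + z)^2 \<partial>gamma_distr k l)
        \<le> 27 * ((real n^4 * F + real k * real n^2) / (real n^4 * F^3 + real k^4 * F))"
    unfolding Let_def F_def[symmetric] l_def[symmetric]
    using \<open>0 < F\<close> \<open>0 < l\<close> n k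
    by (intro min_of_bounds_le_ratio[where l = l] integral_gamma_distr_inverse_square_le_inverse_square
        integral_gamma_distr_inverse_square_le_rate_div integral_gamma_distr_inverse_square_le_shape)
      auto
qed simp

end
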